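(* Let $(\tau,\{\mathbf R_s\}_{s\in\mathcal S})$ be a feasible TWAVRP solution. Then for every ordered pair of distinct customers $(i,j)\in V_C\times V_C$ and every $(d_1,d_2)\in\mathbb R^2$ with $d_1+d_2>w_i+w_j$, at least one of the following holds: (a) for every $s\in\mathcal S$, $\mathbf R_s$ contains no $i$–$j$ path whose travel time under $\theta_s$ is $\ge d_1$; (b) for every $s\in\mathcal S$, $\mathbf R_s$ contains no $j$–$i$ path whose travel time under $\theta_s$ is $\ge d_2$.
   Context: Let $G=(V,A)$ be a directed graph with $V=\{0,1,\dots,n\}$; node $0$ is the depot and $V_C=V\setminus\{0\}$ is the set of customers. The depot has operating window $[e_0,\ell_0]$, vehicles have capacity $Q$, and each customer $i\in V_C$ has an exogenous time window $[e_i,\ell_i]$. A vector of operational parameters $\theta$ consists of arc costs $c_{ij}\ge 0$ and arc travel times $t_{ij}\ge0$ for $(i,j)\in A$, and demands $q_i\ge 0$ and service times $u_i\ge 0$ for $i\in V_C$. The customer set is partitioned as $V_C=V_{\mathrm{cont}}\cup V_{\mathrm{disc}}$ (disjoint). For $i\in V_{\mathrm{cont}}$ a width $w_i\ge0$ with $e_i\le \ell_i-w_i$ is given and $TW_i=\{[y,y+w_i]: e_i\le y\le \ell_i-w_i\}$. For $i\in V_{\mathrm{disc}}$, $TW_i=\{[\underline y_{i1},\bar y_{i1}],\dots,[\underline y_{iN_i},\bar y_{iN_i}]\}$ is a finite set of intervals with $\underline y_{ib}\le\bar y_{ib}$, none contained in another, ordered so that $e_i=\underline y_{i1}<\dots<\underline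 y_{iN_i}$ and $\bar y_{i1}<\dots<\bar y_{iN_i}=\ell_i$; for such $i$ define $w_i=\max_{b}(\bar y_{ib}-\underline y_{ib})$. A route set $\mathbf R=(R_1,\dots,R_m)$ is a collection of pairwise disjoint nonempty sequences $R_k=(R_{k,1},\dots,R_{k,n_k})$ of distinct customers (every customer with positive demand appearing in exactly one sequence). For a vector $\tau=(\tau_1,\dots,\tau_n)$ of closed intervals, $\mathcal X(\mathbf R,\tau;\theta)$ is the set of $\bm a\in\mathbb R^n_{\ge0}$ with: $a_{R_{k,1}}\ge e_0+t_{0,R_{k,1}}$ for all $k$; $a_{R_{k,l+1}}-a_{R_{k,l}}\ge t_{R_{k,l},R_{k,l+1}}+u_{R_{k,l}}$ for all $k$ and $1\le l\le n_k-1$; $a_{R_{k,n_k}}\le \ell_0-t_{R_{k,n_k},0}-u_{R_{k,n_k}}$ for all $k$; and $a_i\in\tau_i$ for all $i\in V_C$. We write $\mathbf R\in\mathcal R(\tau;\theta)$ if $\sum_{i\in R_k}q_i\le Q$ for every $k$ and $\mathcal X(\mathbf R,\tau;\theta)\neq\emptyset$. Finitely many scenarios $\theta_1,\dots,\theta_S$ are given, $\mathcal S=\{1,\dots,S\}$. A feasible TWAVRP solution is a pair $(\tau,\{\mathbf R_s\}_{s\in\mathcal S})$ with $\tau_i\in TW_i$ for all $i\in V_C$ and $\mathbf R_s\in\mathcal R(\tau;\theta_s)$ for all $s$. A route set $\mathbf R$ contains an $i$–$j$ path $\pi=(v_1,\dots,v_p)$ ($p\ge2$, $v_1=i$, $v_p=j$)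 if $\pi$ is a contiguous subsequence of some route $R_k$, i.e. $v_r=R_{k,l+r-1}$ for $r=1,\dots,p$ and some $k,l$. Its travel time under $\theta$ is $t(\pi)=\sum_{r=1}^{p-1}(t_{v_rv_{r+1}}+u_{v_r})$. *)

theory Defs
  imports Complex_Main
begin

text \<open>Operational parameters theta: arc costs, arc travel times, demands, service times.
  Nodes are natural numbers; node 0 is the depot, customers are 1..n.\<close>
record params =
  cst :: "nat \<Rightarrow> nat \<Rightarrow> real"
  tt  :: "nat \<Rightarrow> nat \<Rightarrow> real"
  dem :: "nat \<Rightarrow> real"
  svc :: "nat \<Rightarrow> real"

text \<open>Instance data: number of customers, exogenous windows (index 0 = depot window),
  capacity, partition into continuous / discrete customers, widths for continuous
  customers, and the finite interval lists (indexed 1..N_i) for discrete customers.\<close>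
record twinst =
  ncust :: nat
  ew    :: "nat \<Rightarrow> real"
  lw    :: "nat \<Rightarrow> real"
  cap   :: real
  Vcont :: "nat set"
  Vdisc :: "nat set"
  wcont :: "nat \<Rightarrow> real"
  nb    :: "nat \<Rightarrow> nat"
  ylo   :: "nat \<Rightarrow> nat \<Rightarrow> real"
  yhi   :: "nat \<Rightarrow> nat \<Rightarrow> real"

definition customers :: "twinst \<Rightarrow> nat set" where
  "customers I = {1..ncust I}"

definition width :: "twinst \<Rightarrow> nat \<Rightarrow> real" where
  "width I i = (if i \<in> Vcont I then wcont I i
                else Max ((\<lambda>b. yhi I i b - ylo I i b) ` {1..nb I i}))"

definition valid_instance :: "twinst \<Rightarrow> (nat \<Rightarrow> params) \<Rightarrow> nat \<Rightarrow> bool" where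
  "valid_instance I \<theta>s S \<longleftrightarrow>
     Vcont I \<union> Vdisc I = customers I \<and> Vcont I \<inter> Vdisc I = {} \<and>
     (\<forall>i\<in>Vcont I. wcont I i \<ge> 0 \<and> ew I i \<le> lw I i - wcont I i) \<and>
     (\<forall>i\<in>Vdisc I. nb I i \<ge> 1 \<and>
        (\<forall>b\<in>{1..nb I i}. ylo I i b \<le> yhi I i b) \<and>
        (\<forall>b\<in>{1..nb I i}. \<forall>b'\<in>{1..nb I i}. b \<noteq> b' \<longrightarrow>
             \<not> (ylo I i b' \<le> ylo I i b \<and> yhi I i b \<le> yhi I i b')) \<and>
        (\<forall>b\<in>{1..nb I i}. \<forall>b'\<in>{1..nb I i}. b < b' \<longrightarrow>
             ylo I i b < ylo I i b' \<and> yhi I i b < yhi I i b') \<and>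
        ylo I i 1 = ew I i \<and> yhi I i (nb I i) = lw I i) \<and>
     (\<forall>s\<in>{1..S}.
        (\<forall>i\<in>{0..ncust I}. \<forall>j\<in>{0..ncust I}. cst (\<theta>s s) i j \<ge> 0 \<and> tt (\<theta>s s) i j \<ge> 0) \<and>
        (\<forall>i\<in>customers I. dem (\<theta>s s) i \<ge> 0 \<and> svc (\<theta>s s) i \<ge> 0))"

text \<open>Closed intervals are represented as pairs (lower, upper).\<close>
definition in_TW :: "twinst \<Rightarrow> nat \<Rightarrow> real \<times> real \<Rightarrow> bool" where
  "in_TW I i iv \<longleftrightarrow>
     (if i \<in> Vcont I
      then (\<exists>y. ew I i \<le> y \<and> y \<le> lw I i - wcont I i \<and> iv = (y, y + wcont I i))
      else (\<exists>b\<in>{1..nb I i}. iv = (ylo I i b, yhi I i b)))"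

text \<open>A route set: pairwise disjoint nonempty sequences of distinct customers, every
  customer with positive demand appearing (in exactly one sequence, by disjointness).\<close>
definition route_set :: "twinst \<Rightarrow> params \<Rightarrow> nat list list \<Rightarrow> bool" where
  "route_set I \<theta> R \<longleftrightarrow>
     (\<forall>r\<in>set R. r \<noteq> [] \<and> distinct r \<and> set r \<subseteq> customers I) \<and>
     (\<forall>k<length R. \<forall>k'<length R. k \<noteq> k' \<longrightarrow> set (R ! k) \<inter> set (R ! k') = {}) \<and>
     (\<forall>i\<in>customers I. dem \<theta> i > 0 \<longrightarrow> (\<exists>r\<in>set R. i \<in> set r))"

definition sched_feasible ::
  "twinst \<Rightarrow> params \<Rightarrow> nat list list \<Rightarrow> (nat \<Rightarrow> real \<times> real) \<Rightarrow> (nat \<Rightarrow> real) \<Rightarrow> bool" where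
  "sched_feasible I \<theta> R \<tau> a \<longleftrightarrow>
     (\<forall>i\<in>customers I. a i \<ge> 0 \<and> fst (\<tau> i) \<le> a i \<and> a i \<le> snd (\<tau> i)) \<and>
     (\<forall>r\<in>set R.
        a (hd r) \<ge> ew I 0 + tt \<theta> 0 (hd r) \<and>
        (\<forall>l. Suc l < length r \<longrightarrow>
             a (r ! Suc l) - a (r ! l) \<ge> tt \<theta> (r ! l) (r ! Suc l) + svc \<theta> (r ! l)) \<and>
        a (last r) \<le> lw I 0 - tt \<theta> (last r) 0 - svc \<theta> (last r))"

definition in_RR :: "twinst \<Rightarrow> params \<Rightarrow> (nat \<Rightarrow> real \<times> real) \<Rightarrow> nat list list \<Rightarrow> bool" where
  "in_RR I \<theta> \<tau> R \<longleftrightarrow>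
     route_set I \<theta> R \<and>
     (\<forall>r\<in>set R. sum_list (map (dem \<theta>) r) \<le> cap I) \<and>
     (\<exists>a. sched_feasible I \<theta> R \<tau> a)"

definition feasible_solution ::
  "twinst \<Rightarrow> (nat \<Rightarrow> params) \<Rightarrow> nat \<Rightarrow> (nat \<Rightarrow> real \<times> real) \<Rightarrow> (nat \<Rightarrow> nat list list) \<Rightarrow> bool" where
  "feasible_solution I \<theta>s S \<tau> Rs \<longleftrightarrow>
     (\<forall>i\<in>customers I. in_TW I i (\<tau> i)) \<and>
     (\<forall>s\<in>{1..S}. in_RR I (\<theta>s s) \<tau> (Rs s))"

definition contains_path :: "nat list list \<Rightarrow> nat list \<Rightarrow> bool" where
  "contains_path R \<pi> \<longleftrightarrow> length \<pi> \<ge> 2 \<and> (\<exists>r\<in>set R. \<exists>xs ys. r = xs @ \<pi> @ ys)"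

definition path_time :: "params \<Rightarrow> nat list \<Rightarrow> real" where
  "path_time \<theta> \<pi> = (\<Sum>r<length \<pi> - 1. tt \<theta> (\<pi> ! r) (\<pi> ! Suc r) + svc \<theta> (\<pi> ! r))"

end

theory Submission
  imports Defs
begin

text \<open>Along a route every arrival time exceeds the previous one by at least the travel and
  service time in between, so an \<open>i\<close>--\<open>j\<close> path of travel time \<open>\<ge> d\<^sub>1\<close> in scenario \<open>s\<close>
  forces \<open>a\<^sub>j - a\<^sub>i \<ge> d\<^sub>1\<close>, and a \<open>j\<close>--\<open>i\<close> path of travel time \<open>\<ge> d\<^sub>2\<close> in scenario \<open>s'\<close>
  forces \<open>a'\<^sub>i - a'\<^sub>j \<ge> d\<^sub>2\<close>. The time windows are shared by all scenarios, so \<open>a\<^sub>i, a'\<^sub>i \<in> \<tau>\<^sub>i\<close>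
  and \<open>a\<^sub>j, a'\<^sub>j \<in> \<tau>\<^sub>j\<close>; adding the two inequalities gives
  \<open>d\<^sub>1 + d\<^sub>2 \<le> |\<tau>\<^sub>i| + |\<tau>\<^sub>j| \<le> w\<^sub>i + w\<^sub>j\<close>.\<close>

lemma sum_le_telescope:
  fixes x c :: "nat \<Rightarrow> 'a :: ordered_ab_group_add"
  assumes "\<And>l. l < k \<Longrightarrow> c l \<le> x (Suc l) - x l"
  shows "(\<Sum>l<k. c l) \<le> x k - x 0"
proof -
  have "(\<Sum>l<k. c l) \<le> (\<Sum>l<k. x (Suc l) - x l)"
    using assms by (intro sum_mono) simp
  also have "\<dots> = x k - x 0"
    by (rule sum_lessThan_telescope)
  finally show ?thesis .
qed

lemma sched_feasible_path_step:
  assumes "sched_feasible I \<theta> R \<tau> a" and "contains_path R \<pi>" and "Suc q < length \<pi>"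
  shows "tt \<theta> (\<pi> ! q) (\<pi> ! Suc q) + svc \<theta> (\<pi> ! q) \<le> a (\<pi> ! Suc q) - a (\<pi> ! q)"
proof -
  from assms(2) obtain r xs ys where "r \<in> set R" and r: "r = xs @ \<pi> @ ys"
    unfolding contains_path_def by blast
  then have step: "tt \<theta> (r ! l) (r ! Suc l) + svc \<theta> (r ! l) \<le> a (r ! Suc l) - a (r ! l)"
    if "Suc l < length r" for l
    using assms(1) that unfolding sched_feasible_def by blast
  have in_route: "r ! (length xs + q') = \<pi> ! q'" if "q' < length \<pi>" for q'
    using r that by (simp add: nth_append)
  show ?thesis
    using step[of "length xs + q"] in_route[of q] in_route[of "Suc q"] assms(3) r by simp
qed

lemma path_time_le_arrival_gap:
  assumes "sched_feasible I \<theta> R \<tau> a" and "contains_path R \<pi>"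
  shows "path_time \<theta> \<pi> \<le> a (last \<pi>) - a (hd \<pi>)"
proof -
  define k where "k = length \<pi> - 1"
  have "length \<pi> \<ge> 2"
    using assms(2) by (simp add: contains_path_def)
  then have "\<pi> \<noteq> []"
    by auto
  then have ends: "hd \<pi> = \<pi> ! 0" "last \<pi> = \<pi> ! k"
    by (simp_all add: k_def hd_conv_nth last_conv_nth)
  have "path_time \<theta> \<pi> = (\<Sum>q<k. tt \<theta> (\<pi> ! q) (\<pi> ! Suc q) + svc \<theta> (\<pi> ! q))"
    by (simp add: path_time_def k_def)
  also have "\<dots> \<le> a (\<pi> ! k) - a (\<pi> ! 0)"
    using sched_feasible_path_step[OF assms]
    by (intro sum_le_telescope[where x = "\<lambda>q. a (\<pi> ! q)"]) (simp add: k_def)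
  finally show ?thesis
    by (simp add: ends)
qed

lemma in_TW_length_le_width:
  assumes "in_TW I i iv"
  shows "snd iv - fst iv \<le> width I i"
proof (cases "i \<in> Vcont I")
  case True
  then show ?thesis
    using assms by (auto simp: in_TW_def width_def)
next
  case False
  then obtain b where b: "b \<in> {1..nb I i}" and iv: "iv = (ylo I i b, yhi I i b)"
    using assms by (auto simp: in_TW_def)
  have "yhi I i b - ylo I i b \<le> Max ((\<lambda>b. yhi I i b - ylo I i b) ` {1..nb I i})"
    using b by (intro Max_ge) auto
  then show ?thesis
    using False iv by (simp add: width_def)
qed

lemma feasible_solution_schedule:
  assumes "feasible_solution I \<theta>s S \<tau> Rs" and "s \<in> {1..S}"
  obtains a where "sched_feasible I (\<theta>s s) (Rs s) \<tau> a"
  using assms unfolding feasible_solution_def in_RR_def by blast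

lemma sched_feasible_in_window:
  assumes "sched_feasible I \<theta> R \<tau> a" and "i \<in> customers I"
  shows "fst (\<tau> i) \<le> a i" and "a i \<le> snd (\<tau> i)"
  using assms unfolding sched_feasible_def by auto

theorem mainTheorem4:
  fixes I :: twinst and \<theta>s :: "nat \<Rightarrow> params" and S :: nat
    and \<tau> :: "nat \<Rightarrow> real \<times> real" and Rs :: "nat \<Rightarrow> nat list list"
    and i j :: nat and d1 d2 :: real
  assumes "valid_instance I \<theta>s S"
    and "feasible_solution I \<theta>s S \<tau> Rs"
    and "i \<in> customers I" and "j \<in> customers I" and "i \<noteq> j"
    and "d1 + d2 > width I i + width I j"
  shows "(\<forall>s\<in>{1..S}. \<not> (\<exists>\<pi>. contains_path (Rs s) \<pi> \<and> hd \<pi> = i \<and> last \<pi> = j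
                                  \<and> path_time (\<theta>s s) \<pi> \<ge> d1))
       \<or> (\<forall>s\<in>{1..S}. \<not> (\<exists>\<pi>. contains_path (Rs s) \<pi> \<and> hd \<pi> = j \<and> last \<pi> = i
                                  \<and> path_time (\<theta>s s) \<pi> \<ge> d2))"
proof (rule ccontr)
  assume "\<not> ?thesis"
  then obtain s \<pi> s' \<pi>'
    where s: "s \<in> {1..S}" "contains_path (Rs s) \<pi>" "hd \<pi> = i" "last \<pi> = j"
      "path_time (\<theta>s s) \<pi> \<ge> d1"
    and s': "s' \<in> {1..S}" "contains_path (Rs s') \<pi>'" "hd \<pi>' = j" "last \<pi>' = i"
      "path_time (\<theta>s s') \<pi>' \<ge> d2"
    by blast
  obtain a where a: "sched_feasible I (\<theta>s s) (Rs s) \<tau> a"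
    using feasible_solution_schedule[OF assms(2) s(1)] .
  obtain a' where a': "sched_feasible I (\<theta>s s') (Rs s') \<tau> a'"
    using feasible_solution_schedule[OF assms(2) s'(1)] .
  have "d1 \<le> a j - a i"
    using path_time_le_arrival_gap[OF a s(2)] s by simp
  moreover have "d2 \<le> a' i - a' j"
    using path_time_le_arrival_gap[OF a' s'(2)] s' by simp
  moreover have "snd (\<tau> i) - fst (\<tau> i) \<le> width I i" "snd (\<tau> j) - fst (\<tau> j) \<le> width I j"
    using assms(2-4) in_TW_length_le_width by (auto simp: feasible_solution_def)
  ultimately show False
    using sched_feasible_in_window[OF a assms(3)] sched_feasible_in_window[OF a assms(4)]
      sched_feasible_in_window[OF a' assms(3)] sched_feasible_in_window[OF a' assms(4)] assms(6)
    by linarith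
qed

end
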